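(* Let $k$ be a non-archimedean local field of residue characteristic $2$. Let $B(x)=\varpi(x_1^2-\Delta x_2^2)$ on $k^2$, where $\Delta$ is a unit of $\mathfrak o$ with quadratic defect $4\mathfrak o$. Let $z=q^{-\beta}$, $w=zq^{-1}$, and $t\in\mathfrak o\setminus\{0\}$ with $|t|=q^{-T}$. If $2T<e$, then $X^B(\beta;t^2)=0$. If $2T\ge e$, then, writing $(T-e)^+=\max\{T-e,0\}$ and $(T-e)^-=\min\{T-e,0\}$, \[ X^B(\beta;t^2)=\frac{|\varpi|^{\lfloor e/2\rfloor}+z\,|\varpi|^{\lceil e/2\rceil}-z\,w^e\,(zw)^{(T-e)^-}(w+1)}{1-zw} +\frac{w^e\,(z+w^2)\,\bigl(1-w^{2(T-e)^+}\bigr)}{1-w^2}. \]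
   Context: $k$ has ring of integers $\mathfrak o$, uniformizer $\varpi$, residue field of cardinality $q$, absolute value normalized by $|\varpi|=q^{-1}$, and $e=\operatorname{ord}(2)$ is the ramification index. On $\mathfrak o^n$ use the additive Haar measure of total mass $1$. For a quadratic form $B$ on $k^n$, $\rho\in\mathfrak o$ and integer $\ell\ge0$: $X_\ell^B(\rho)=\operatorname{meas}\{x\in\mathfrak o^n: B(x)-\rho\in 2\varpi^\ell\mathfrak o\}$ and $X^B(\beta;\rho)=\sum_{\ell\ge0}z^\ell X_\ell^B(\rho)$ with $z=q^{-\beta}$. The quadratic defect of $\rho\in k$ is the intersection of all ideals $b\mathfrak o$ over those $b\in k$ for which $\rho-b$ is a square in $k$. *)

theory Defs
  imports "HOL-Analysis.Analysis"
begin

text \<open>A field k with a normalized discrete valuation v (v 0 is irrelevant; 0 is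
  always treated separately).  Ring of integers, ideals of the form varpi^m o.\<close>

definition val_ideal :: "('a::field \<Rightarrow> int) \<Rightarrow> int \<Rightarrow> 'a set" where
  "val_ideal v m = {x. x = 0 \<or> m \<le> v x}"

abbreviation ring_int :: "('a::field \<Rightarrow> int) \<Rightarrow> 'a set" where
  "ring_int v \<equiv> val_ideal v 0"

definition principal :: "('a::field \<Rightarrow> int) \<Rightarrow> 'a \<Rightarrow> 'a set" where
  "principal v b = {b * y | y. y \<in> ring_int v}"

definition nonarch_local_field :: "('a::field \<Rightarrow> int) \<Rightarrow> nat \<Rightarrow> bool" where
  "nonarch_local_field v q \<longleftrightarrow>
     (\<forall>x y. x \<noteq> 0 \<longrightarrow> y \<noteq> 0 \<longrightarrow> v (x * y) = v x + v y) \<and>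
     (\<forall>x y. x \<noteq> 0 \<longrightarrow> y \<noteq> 0 \<longrightarrow> x + y \<noteq> 0 \<longrightarrow> min (v x) (v y) \<le> v (x + y)) \<and>
     (\<exists>p. p \<noteq> 0 \<and> v p = 1) \<and>
     finite (ring_int v // {(x, y). x - y \<in> val_ideal v 1}) \<and>
     card (ring_int v // {(x, y). x - y \<in> val_ideal v 1}) = q \<and>
     (\<forall>s :: nat \<Rightarrow> 'a.
        (\<forall>N. \<exists>M. \<forall>m\<ge>M. \<forall>n\<ge>M. s m - s n \<in> val_ideal v N) \<longrightarrow>
        (\<exists>L. \<forall>N. \<exists>M. \<forall>n\<ge>M. s n - L \<in> val_ideal v N))"

definition residue_char_two :: "('a::field \<Rightarrow> int) \<Rightarrow> bool" where
  "residue_char_two v \<longleftrightarrow> (2::'a) \<in> val_ideal v 1"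

definition ord2 :: "('a::field \<Rightarrow> int) \<Rightarrow> enat" where
  "ord2 v = (if (2::'a) = 0 then \<infinity> else enat (nat (v 2)))"

definition quad_defect :: "('a::field \<Rightarrow> int) \<Rightarrow> 'a \<Rightarrow> 'a set" where
  "quad_defect v \<rho> = \<Inter>{principal v b | b. \<exists>s. \<rho> - b = s ^ 2}"

text \<open>Haar measure of total mass 1 on o^2 (for compact open S \<subseteq> o^2):
  limit of (number of cosets of (varpi^m o)^2 meeting S) / q^(2m).\<close>
definition cong2 :: "('a::field \<Rightarrow> int) \<Rightarrow> nat \<Rightarrow> (('a \<times> 'a) \<times> ('a \<times> 'a)) set" where
  "cong2 v m = {((a, b), (c, d)). a - c \<in> val_ideal v (int m) \<and> b - d \<in> val_ideal v (int m)}"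

definition haar2 :: "('a::field \<Rightarrow> int) \<Rightarrow> nat \<Rightarrow> ('a \<times> 'a) set \<Rightarrow> real" where
  "haar2 v q S = lim (\<lambda>m. real (card (S // cong2 v m)) / real q ^ (2 * m))"

definition Xl :: "('a::field \<Rightarrow> int) \<Rightarrow> nat \<Rightarrow> 'a \<Rightarrow> ('a \<times> 'a \<Rightarrow> 'a) \<Rightarrow> 'a \<Rightarrow> nat \<Rightarrow> real" where
  "Xl v q \<pi> B \<rho> l =
     haar2 v q {x \<in> ring_int v \<times> ring_int v. B x - \<rho> \<in> principal v (2 * \<pi> ^ l)}"

end

theory Submission
  imports Defs
begin

(* Write N(x) = x1^2 - Delta x2^2 and e = ord 2. As the quadratic defect of Delta is 4o, some s has
   ord (Delta - s^2) >= 2e while ord (Delta - r^2) <= 2e for every r. Expanding N around x1 = s x2 shows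
   that N(x) lies in varpi^m o exactly when x1 - s x2 lies in varpi^ceil(m/2) o and x2 in
   varpi^(ceil(m/2) - e) o. In particular ord N(x) is even, so ord (varpi N(x)) is odd and
   varpi N(x) can only be congruent to t^2 modulo 2 varpi^l o when e + l <= 2T; the solution set is then
   a sheared box of measure q^-(A + max (A - e) 0), A = floor ((e + l) / 2). The series X^B is thus a
   polynomial in z, summed in closed form by induction on T. In characteristic 2 the defect is {0},
   Delta is a limit of squares r^2, and (x1 - r x2)^2 = N(x) + (Delta - r^2) x2^2 again forces ord N(x)
   to be even, so X^B vanishes. *)

section \<open>Valuation ideals\<close>

locale valued_field =
  fixes v :: "'a::field \<Rightarrow> int"
  assumes val_mult: "x \<noteq> 0 \<Longrightarrow> y \<noteq> 0 \<Longrightarrow> v (x * y) = v x + v y"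
    and val_add: "x \<noteq> 0 \<Longrightarrow> y \<noteq> 0 \<Longrightarrow> x + y \<noteq> 0 \<Longrightarrow> min (v x) (v y) \<le> v (x + y)"
begin

abbreviation I :: "int \<Rightarrow> 'a set" where
  "I m \<equiv> val_ideal v m"

lemma mem_I_iff: "x \<in> I m \<longleftrightarrow> x = 0 \<or> m \<le> v x"
  by (simp add: val_ideal_def)

lemma val_one [simp]: "v 1 = 0"
  using val_mult[of 1 1] by simp

lemma val_divide: "x \<noteq> 0 \<Longrightarrow> y \<noteq> 0 \<Longrightarrow> v (x / y) = v x - v y"
  using val_mult[of "x / y" y] by simp

lemma val_minus: "v (- x) = v x"
proof (cases "x = 0")
  case False
  have "v (-1) = 0"
    using val_mult[of "-1" "-1"] by simp
  then show ?thesis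
    using val_mult[of "-1" x] False by simp
qed simp

lemma val_power: "x \<noteq> 0 \<Longrightarrow> v (x ^ n) = int n * v x"
  by (induction n) (simp_all add: val_mult algebra_simps)

lemma zero_mem_I [simp]: "0 \<in> I m"
  by (simp add: mem_I_iff)

lemma mem_I_val: "x \<in> I (v x)"
  by (simp add: mem_I_iff)

lemma I_antimono: "m \<le> n \<Longrightarrow> I n \<subseteq> I m"
  by (auto simp: mem_I_iff)

lemma I_uminus: "x \<in> I m \<Longrightarrow> - x \<in> I m"
  by (simp add: mem_I_iff val_minus)

lemma I_add: "x \<in> I m \<Longrightarrow> y \<in> I m \<Longrightarrow> x + y \<in> I m"
  using val_add[of x y] by (cases "x = 0"; cases "y = 0"; cases "x + y = 0") (auto simp: mem_I_iff)

lemma I_diff: "x \<in> I m \<Longrightarrow> y \<in> I m \<Longrightarrow> x - y \<in> I m"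
  using I_add[of x m "- y"] I_uminus[of y m] by simp

lemma diff_mem_I_iff: "y \<in> I m \<Longrightarrow> x - y \<in> I m \<longleftrightarrow> x \<in> I m"
  using I_diff[of x m y] I_add[of "x - y" m y] by auto

lemma I_mult: "x \<in> I m \<Longrightarrow> y \<in> I n \<Longrightarrow> k \<le> m + n \<Longrightarrow> x * y \<in> I k"
  by (cases "x = 0"; cases "y = 0") (auto simp: mem_I_iff val_mult)

lemma val_add_dominant:
  assumes "x \<noteq> 0" "y \<in> I (v x + 1)"
  shows "x + y \<noteq> 0" "v (x + y) = v x"
proof -
  show ne: "x + y \<noteq> 0"
    using assms val_minus[of x] by (auto simp: mem_I_iff simp flip: eq_neg_iff_add_eq_0)
  show "v (x + y) = v x"
  proof (cases "y = 0")
    case False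
    have "v x \<ge> min (v (x + y)) (v (- y))"
      using val_add[of "x + y" "- y"] ne False assms(1) by simp
    then show ?thesis
      using val_add[OF assms(1) False ne] assms(2) False by (auto simp: mem_I_iff val_minus)
  qed simp
qed

lemma principal_eq_I:
  assumes "c \<noteq> 0"
  shows "principal v c = I (v c)"
proof (intro set_eqI iffI)
  fix x assume "x \<in> I (v c)"
  then have "x / c \<in> I 0"
    using assms by (cases "x = 0") (auto simp: mem_I_iff val_divide)
  moreover have "x = c * (x / c)"
    using assms by simp
  ultimately show "x \<in> principal v c"
    unfolding principal_def by blast
qed (auto simp: principal_def intro: I_mult[OF mem_I_val])

lemma principal_zero: "principal v 0 = {0}"
  unfolding principal_def by (auto intro: exI[of _ 0])

lemma val_two_nonneg: "(2::'a) \<noteq> 0 \<Longrightarrow> 0 \<le> v 2"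
  using val_add[of 1 1] by simp

lemma mem_I0_of_square: "s ^ 2 \<in> I 0 \<Longrightarrow> s \<in> I 0"
  by (cases "s = 0") (simp_all add: mem_I_iff val_power)

end

section \<open>Counting residue classes\<close>

lemma quotient_bij_image:
  assumes "bij f" "\<And>x y. (f x, f y) \<in> r' \<longleftrightarrow> (x, y) \<in> r"
  shows "(f ` S) // r' = (\<lambda>C. f ` C) ` (S // r)"
proof -
  have "r' `` {f x} = f ` (r `` {x})" for x
  proof (intro set_eqI iffI)
    fix y assume "y \<in> r' `` {f x}"
    moreover obtain z where "y = f z"
      using assms(1) by (metis bij_pointE)
    ultimately show "y \<in> f ` (r `` {x})"
      using assms(2) by auto
  qed (use assms(2) in auto)
  then show ?thesis
    unfolding quotient_def by auto
qed

lemma card_quotient_bij_image: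
  assumes "bij f" "\<And>x y. (f x, f y) \<in> r' \<longleftrightarrow> (x, y) \<in> r"
  shows "finite ((f ` S) // r') \<longleftrightarrow> finite (S // r)" "card ((f ` S) // r') = card (S // r)"
proof -
  have "inj_on (\<lambda>C. f ` C) (S // r)"
    using assms(1) by (meson bij_is_inj inj_image_eq_iff inj_onI)
  then show "finite ((f ` S) // r') \<longleftrightarrow> finite (S // r)" "card ((f ` S) // r') = card (S // r)"
    unfolding quotient_bij_image[OF assms] by (simp_all add: finite_image_iff card_image)
qed

lemma card_quotient_refine:
  assumes R: "equiv UNIV R" and S: "equiv UNIV S" and "R \<subseteq> S" "S `` A \<subseteq> A"
    and fin: "finite (A // S)"
    and classes: "\<And>C. C \<in> A // S \<Longrightarrow> finite (C // R) \<and> card (C // R) = k"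
  shows "finite (A // R) \<and> card (A // R) = k * card (A // S)"
proof -
  have sub: "X \<subseteq> C" if "C \<in> A // S" "X \<in> C // R" for C X
    using that assms(3) S by (auto elim!: quotientE dest: equiv_class_eq[OF S])
  have "A // R = (\<Union>C \<in> A // S. C // R)"
  proof (intro set_eqI iffI)
    fix X assume "X \<in> A // R"
    then obtain x where "x \<in> A" "X = R `` {x}"
      by (rule quotientE)
    moreover have "x \<in> S `` {x}"
      using S by (rule equiv_class_self) simp
    ultimately show "X \<in> (\<Union>C \<in> A // S. C // R)"
      by (blast intro: quotientI)
  next
    fix X assume "X \<in> (\<Union>C \<in> A // S. C // R)"
    then obtain C where "C \<in> A // S" "X \<in> C // R"
      by blast
    moreover from this(2) obtain y where "y \<in> C" "X = R `` {y}"
      by (rule quotientE)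
    moreover have "C \<subseteq> A"
      using \<open>C \<in> A // S\<close> assms(4) by (auto elim!: quotientE)
    ultimately show "X \<in> A // R"
      by (auto intro: quotientI)
  qed
  moreover have "C // R \<inter> C' // R = {}" if "C \<in> A // S" "C' \<in> A // S" "C \<noteq> C'" for C C'
  proof -
    have "C \<in> UNIV // S" "C' \<in> UNIV // S"
      using that(1,2) by (auto simp: quotient_def)
    then have "C \<inter> C' = {}"
      using quotient_disj[OF S] that(3) by metis
    moreover have "X \<noteq> {}" if "X \<in> C // R" for X
      using that by (rule quotientE) (use equiv_class_self[OF R] in blast)
    ultimately show ?thesis
      using sub that by blast
  qed
  ultimately show ?thesis
    using fin classes by (simp add: card_UN_disjoint)
qed

context valued_field
begin

definition cong_val :: "int \<Rightarrow> ('a \<times> 'a) set" where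
  "cong_val m = {(x, y). x - y \<in> I m}"

lemma equiv_cong_val: "equiv UNIV (cong_val m)"
proof (rule equivI)
  show "sym (cong_val m)"
    unfolding cong_val_def sym_def using I_uminus by fastforce
  show "trans (cong_val m)"
    unfolding cong_val_def trans_def using I_add by fastforce
qed (auto simp: cong_val_def refl_on_def)

lemma self_mem_cong_val_class [simp]: "x \<in> cong_val m `` {x}"
  by (simp add: cong_val_def)

lemma I_eq_cong_val_class: "I m = cong_val m `` {0}"
  by (auto simp: cong_val_def dest: I_uminus)

lemma cong2_class: "cong2 v m `` {(a, b)} = cong_val (int m) `` {a} \<times> cong_val (int m) `` {b}"
  by (auto simp: cong2_def cong_val_def)

lemma card_quotient_cong2:
  "card ((X \<times> Y) // cong2 v m) = card (X // cong_val (int m)) * card (Y // cong_val (int m))"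
proof -
  let ?R = "cong_val (int m)"
  have "(X \<times> Y) // cong2 v m
      = (\<lambda>(C, D). C \<times> D) ` ((\<lambda>(a, b). (?R `` {a}, ?R `` {b})) ` (X \<times> Y))"
    unfolding quotient_def UNION_singleton_eq_range image_image
    by (rule image_cong) (simp_all add: cong2_class split: prod.split)
  also have "\<dots> = (\<lambda>(C, D). C \<times> D) ` (X // ?R \<times> Y // ?R)"
    unfolding image_paired_Times quotient_def UNION_singleton_eq_range ..
  finally have "(X \<times> Y) // cong2 v m = (\<lambda>(C, D). C \<times> D) ` (X // ?R \<times> Y // ?R)" .
  moreover have "inj_on (\<lambda>(C, D). C \<times> D) (X // ?R \<times> Y // ?R)"
  proof (rule inj_onI, clarify)
    fix C D C' D'
    assume "C \<in> X // ?R" "D \<in> Y // ?R" "C' \<in> X // ?R" "D' \<in> Y // ?R" "C \<times> D = C' \<times> D'"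
    moreover have "Z \<noteq> {}" if "Z \<in> W // ?R" for Z W
      using that by (metis quotientE self_mem_cong_val_class empty_iff)
    ultimately show "C = C' \<and> D = D'"
      by (simp add: times_eq_iff)
  qed
  ultimately show ?thesis
    by (simp add: card_image card_cartesian_product)
qed

end

locale discretely_valued_field = valued_field +
  fixes \<pi> :: 'a
  assumes uniformizer_nonzero: "\<pi> \<noteq> 0" and val_uniformizer: "v \<pi> = 1"
begin

lemma val_uniformizer_power: "v (\<pi> ^ n) = int n"
  by (simp add: val_power uniformizer_nonzero val_uniformizer)

lemma uniformizer_power_mult_mem_I_iff: "\<pi> ^ n * y \<in> I (m + int n) \<longleftrightarrow> y \<in> I m"
  by (cases "y = 0") (auto simp: mem_I_iff val_mult uniformizer_nonzero val_uniformizer_power)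

lemma affine_image_I: "(\<lambda>y. x + \<pi> ^ n * y) ` I m = cong_val (m + int n) `` {x}"
proof (intro set_eqI iffI)
  fix z assume "z \<in> cong_val (m + int n) `` {x}"
  then have "\<pi> ^ n * ((z - x) / \<pi> ^ n) \<in> I (m + int n)"
    using uniformizer_nonzero by (auto simp: cong_val_def dest: I_uminus)
  then have "(z - x) / \<pi> ^ n \<in> I m"
    by (simp only: uniformizer_power_mult_mem_I_iff)
  moreover have "z = x + \<pi> ^ n * ((z - x) / \<pi> ^ n)"
    using uniformizer_nonzero by simp
  ultimately show "z \<in> (\<lambda>y. x + \<pi> ^ n * y) ` I m"
    by blast
next
  fix z assume "z \<in> (\<lambda>y. x + \<pi> ^ n * y) ` I m"
  then obtain y where "y \<in> I m" "z = x + \<pi> ^ n * y"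
    by blast
  then show "z \<in> cong_val (m + int n) `` {x}"
    by (auto simp: cong_val_def uniformizer_power_mult_mem_I_iff intro: I_uminus)
qed

lemma card_quotient_cong_val_class:
  "finite ((cong_val (int j) `` {x}) // cong_val (int j + int n)) \<longleftrightarrow> finite (I 0 // cong_val n)"
  "card ((cong_val (int j) `` {x}) // cong_val (int j + int n)) = card (I 0 // cong_val n)"
proof -
  let ?f = "\<lambda>y. x + \<pi> ^ j * y"
  have "bij ?f"
    by (rule o_bij[where g = "\<lambda>z. (z - x) / \<pi> ^ j"]) (auto simp: uniformizer_nonzero)
  moreover have "(?f y, ?f y') \<in> cong_val (int j + int n) \<longleftrightarrow> (y, y') \<in> cong_val n" for y y'
    using uniformizer_power_mult_mem_I_iff[of j "y - y'" "int n"]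
    by (simp add: cong_val_def algebra_simps)
  moreover have "?f ` I 0 = cong_val (int j) `` {x}"
    using affine_image_I[of x j 0] by simp
  ultimately show
    "finite ((cong_val (int j) `` {x}) // cong_val (int j + int n)) \<longleftrightarrow> finite (I 0 // cong_val n)"
    "card ((cong_val (int j) `` {x}) // cong_val (int j + int n)) = card (I 0 // cong_val n)"
    using card_quotient_bij_image[of ?f "cong_val (int j + int n)" "cong_val n" "I 0"] by simp_all
qed

end

locale residually_finite_dvf = discretely_valued_field +
  fixes q :: nat
  assumes finite_residue_field: "finite (I 0 // {(x, y). x - y \<in> I 1})"
    and card_residue_field: "card (I 0 // {(x, y). x - y \<in> I 1}) = q"
begin

lemma card_residue_field_ge_2: "2 \<le> q"
proof -
  have "(0, 1) \<notin> cong_val 1"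
    by (simp add: cong_val_def mem_I_iff val_minus)
  then have "cong_val 1 `` {0} \<noteq> cong_val 1 `` {1}"
    using eq_equiv_class_iff[OF equiv_cong_val] by blast
  moreover have "{cong_val 1 `` {0}, cong_val 1 `` {1}} \<subseteq> I 0 // cong_val 1"
    by (auto intro!: quotientI simp: mem_I_iff)
  then have "card {cong_val 1 `` {0}, cong_val 1 `` {1}} \<le> card (I 0 // cong_val 1)"
    using finite_residue_field by (intro card_mono) (simp_all add: cong_val_def)
  ultimately have "2 \<le> card (I 0 // cong_val 1)"
    by simp
  then show ?thesis
    using card_residue_field by (simp add: cong_val_def)
qed

lemma card_quotient_I0: "finite (I 0 // cong_val (int n)) \<and> card (I 0 // cong_val (int n)) = q ^ n"
proof (induction n)
  case 0
  have "cong_val 0 `` {x} = I 0" if "x \<in> I 0" for x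
    using that equiv_class_eq[OF equiv_cong_val] unfolding I_eq_cong_val_class by blast
  then have "I 0 // cong_val 0 = {I 0}"
    unfolding quotient_def using zero_mem_I by blast
  then show ?case
    by simp
next
  case (Suc n)
  have "y \<in> I 0" if "x \<in> I 0" "x - y \<in> I (int n)" for x y
    using I_diff[OF that(1) I_antimono[of 0 "int n", THEN subsetD, OF _ that(2)]] by simp
  then have "cong_val (int n) `` I 0 \<subseteq> I 0"
    by (auto simp: cong_val_def)
  moreover have "finite (C // cong_val (int n + 1)) \<and> card (C // cong_val (int n + 1)) = q"
    if "C \<in> I 0 // cong_val (int n)" for C
    using that card_quotient_cong_val_class[of n _ 1] finite_residue_field card_residue_field
    by (auto elim!: quotientE simp: cong_val_def)
  moreover have "cong_val (int n + 1) \<subseteq> cong_val (int n)"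
    using I_antimono[of "int n" "int n + 1"] by (auto simp: cong_val_def)
  ultimately have "finite (I 0 // cong_val (int n + 1)) \<and> card (I 0 // cong_val (int n + 1)) = q * q ^ n"
    using card_quotient_refine[OF equiv_cong_val equiv_cong_val] Suc by simp
  then show ?case
    by (simp add: add.commute)
qed

lemma card_quotient_I:
  assumes "j \<le> m"
  shows "card (I (int j) // cong_val (int m)) = q ^ (m - j)"
  using card_quotient_cong_val_class(2)[of j 0 "m - j"] card_quotient_I0[of "m - j"] assms
  by (simp add: I_eq_cong_val_class)

end

lemma haar2_empty: "haar2 v q {} = 0"
  by (simp add: haar2_def)

context residually_finite_dvf
begin

lemma card_quotient_sheared_box:
  assumes s: "s \<in> I 0" and m: "A + B \<le> m"
  shows "card ({p. fst p - s * snd p \<in> I (int A) \<and> snd p \<in> I (int B)} // cong2 v m)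
    = q ^ (m - A) * q ^ (m - B)"
proof -
  let ?S = "{p. fst p - s * snd p \<in> I (int A) \<and> snd p \<in> I (int B)}"
  define shear where "shear = (\<lambda>(a, b). (a - s * b, b))"
  have "bij shear"
    unfolding shear_def by (rule o_bij[where g = "\<lambda>(a, b). (a + s * b, b)"]) auto
  moreover have "(shear (a, b), shear (c, d)) \<in> cong2 v m \<longleftrightarrow> ((a, b), (c, d)) \<in> cong2 v m" for a b c d
  proof -
    have "a - s * b - (c - s * d) \<in> I (int m) \<longleftrightarrow> a - c \<in> I (int m)" if "b - d \<in> I (int m)"
    proof -
      have "a - s * b - (c - s * d) = (a - c) - s * (b - d)"
        by (simp add: algebra_simps)
      moreover have "s * (b - d) \<in> I (int m)"
        using I_mult[OF s that] by simp
      ultimately show ?thesis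
        by (simp only: diff_mem_I_iff)
    qed
    then show ?thesis
      unfolding shear_def cong2_def by auto
  qed
  moreover have "shear ` ?S = I (int A) \<times> I (int B)"
  proof (intro set_eqI iffI)
    fix p assume "p \<in> I (int A) \<times> I (int B)"
    then have "(fst p + s * snd p, snd p) \<in> ?S" "p = shear (fst p + s * snd p, snd p)"
      by (auto simp: shear_def)
    then show "p \<in> shear ` ?S"
      by blast
  qed (auto simp: shear_def)
  ultimately have "card (?S // cong2 v m) = card ((I (int A) \<times> I (int B)) // cong2 v m)"
    using card_quotient_bij_image(2)[of shear "cong2 v m" "cong2 v m" ?S] by fastforce
  then show ?thesis
    using m by (simp add: card_quotient_cong2 card_quotient_I)
qed

lemma haar2_sheared_box:
  assumes s: "s \<in> I 0"
  shows "haar2 v q {p. fst p - s * snd p \<in> I (int A) \<and> snd p \<in> I (int B)} = (1 / real q) ^ (A + B)"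
proof -
  have "real (card ({p. fst p - s * snd p \<in> I (int A) \<and> snd p \<in> I (int B)} // cong2 v m))
    / real q ^ (2 * m) = (1 / real q) ^ (A + B)" if "A + B \<le> m" for m
  proof -
    have "real q ^ (m - A) * real q ^ (m - B) * real q ^ (A + B) = real q ^ (2 * m)"
      using that by (simp flip: power_add add: mult_2)
    then show ?thesis
      using card_quotient_sheared_box[OF s that] card_residue_field_ge_2 by (simp add: field_simps)
  qed
  then show ?thesis
    unfolding haar2_def by (intro limI tendsto_eventually) (auto simp: eventually_sequentially)
qed

end

section \<open>The quadratic defect and the norm form\<close>

context valued_field
begin

lemma principal_val_le: "a \<in> principal v b \<Longrightarrow> a \<noteq> 0 \<Longrightarrow> b \<noteq> 0 \<and> v b \<le> v a"
  by (auto simp: principal_def mem_I_iff val_mult)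

lemma mem_quad_defect_iff: "y \<in> quad_defect v \<rho> \<longleftrightarrow> (\<forall>r. y \<in> principal v (\<rho> - r ^ 2))"
proof -
  have "\<rho> - b = r ^ 2 \<longleftrightarrow> b = \<rho> - r ^ 2" for b r
    by (auto simp: algebra_simps)
  then have "{principal v b |b. \<exists>s. \<rho> - b = s ^ 2} = range (\<lambda>r. principal v (\<rho> - r ^ 2))"
    by auto
  then show ?thesis
    unfolding quad_defect_def by simp
qed

lemma quad_defect_val_bound:
  assumes "quad_defect v \<rho> = principal v c" "c \<noteq> 0"
  shows "\<rho> - r ^ 2 \<noteq> 0 \<and> v (\<rho> - r ^ 2) \<le> v c"
proof -
  have "c \<in> principal v c"
    using assms(2) by (simp add: principal_eq_I mem_I_val)
  then show ?thesis
    using assms principal_val_le mem_quad_defect_iff by metis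
qed

lemma val_norm_form_le:
  assumes far: "\<And>r. \<Delta> - r ^ 2 \<noteq> 0 \<and> v (\<Delta> - r ^ 2) \<le> 2 * v 2" and x2: "x2 \<noteq> 0"
  shows "x1 ^ 2 - \<Delta> * x2 ^ 2 \<noteq> 0 \<and> v (x1 ^ 2 - \<Delta> * x2 ^ 2) \<le> 2 * v 2 + 2 * v x2"
proof -
  have "x1 ^ 2 - \<Delta> * x2 ^ 2 = - ((\<Delta> - (x1 / x2) ^ 2) * x2 ^ 2)"
    using x2 by (simp add: field_simps power2_eq_square)
  then show ?thesis
    using far[of "x1 / x2"] x2 by (simp add: val_minus val_mult val_power)
qed

lemma norm_form_remainder_mem_I:
  assumes s: "s \<in> I 0" and close: "\<Delta> - s ^ 2 \<in> I (2 * v 2)"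
    and "x1 - s * x2 \<in> I a" "x2 \<in> I b" "k \<le> v 2 + a + b" "k \<le> 2 * v 2 + 2 * b"
  shows "2 * s * x2 * (x1 - s * x2) - (\<Delta> - s ^ 2) * x2 ^ 2 \<in> I k"
proof -
  have "2 * s * x2 \<in> I (v 2 + b)"
    using I_mult[OF I_mult[OF mem_I_val s order.refl] assms(4) order.refl] by simp
  then have "2 * s * x2 * (x1 - s * x2) \<in> I k"
    using I_mult assms(3,5) by (simp add: add.commute add.left_commute)
  moreover have "(\<Delta> - s ^ 2) * x2 ^ 2 \<in> I k"
    using I_mult[OF close I_mult[OF assms(4) assms(4) order.refl]] assms(6)
    by (simp add: power2_eq_square)
  ultimately show ?thesis
    by (rule I_diff)
qed

(* With d = x1 - s x2 we have N = d^2 + (2 s x2 d - (Delta - s^2) x2^2). The upper bound on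
   ord (Delta - r^2) keeps x2 small whenever N is small; the bracket then has larger order than d^2
   unless d is small as well. The condition m <= 2j <= m + 1 says j = ceil(m/2). *)
lemma norm_form_mem_I_iff:
  assumes s: "s \<in> I 0" and close: "\<Delta> - s ^ 2 \<in> I (2 * v 2)"
    and far: "\<And>r. \<Delta> - r ^ 2 \<noteq> 0 \<and> v (\<Delta> - r ^ 2) \<le> 2 * v 2"
    and j: "m \<le> 2 * j" "2 * j \<le> m + 1"
  shows "x1 ^ 2 - \<Delta> * x2 ^ 2 \<in> I m \<longleftrightarrow> x1 - s * x2 \<in> I j \<and> x2 \<in> I (j - v 2)"
proof -
  define d where "d = x1 - s * x2"
  define R where "R = 2 * s * x2 * d - (\<Delta> - s ^ 2) * x2 ^ 2"
  have N: "x1 ^ 2 - \<Delta> * x2 ^ 2 = d ^ 2 + R"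
    unfolding d_def R_def by (simp add: algebra_simps power2_eq_square)
  have R_mem: "R \<in> I k"
    if "d \<in> I a" "x2 \<in> I b" "k \<le> v 2 + a + b" "k \<le> 2 * v 2 + 2 * b" for a b k
    using norm_form_remainder_mem_I[OF s close that[unfolded d_def]] unfolding R_def d_def .
  have d_sq: "d ^ 2 \<in> I (2 * a)" if "d \<in> I a" for a
    using I_mult[OF that that] by (simp add: power2_eq_square)
  show ?thesis
    unfolding N d_def[symmetric]
  proof
    assume "d \<in> I j \<and> x2 \<in> I (j - v 2)"
    then have "d ^ 2 + R \<in> I (2 * j)"
      using I_add d_sq R_mem[of j "j - v 2" "2 * j"] by auto
    then show "d ^ 2 + R \<in> I m"
      using I_antimono j(1) by blast
  next
    assume N_mem: "d ^ 2 + R \<in> I m"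
    have x2: "x2 \<in> I (j - v 2)"
    proof (cases "x2 = 0")
      case False
      then show ?thesis
        using val_norm_form_le[OF far False, of x1] N_mem j unfolding N by (simp add: mem_I_iff)
    qed simp
    have "d \<in> I j"
    proof (rule ccontr)
      assume "d \<notin> I j"
      then have d: "d \<noteq> 0" "v d < j"
        by (auto simp: mem_I_iff)
      have "R \<in> I (v (d ^ 2) + 1)"
        using R_mem[OF mem_I_val x2] d by (simp add: val_power)
      from val_add_dominant[OF _ this] have "d ^ 2 + R \<noteq> 0" "v (d ^ 2 + R) = 2 * v d"
        using d by (simp_all add: val_power)
      then show False
        using N_mem d j by (simp add: mem_I_iff)
    qed
    with x2 show "d \<in> I j \<and> x2 \<in> I (j - v 2)"
      by blast
  qed
qed

lemma even_val_norm_form: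
  assumes s: "s \<in> I 0" and close: "\<Delta> - s ^ 2 \<in> I (2 * v 2)"
    and far: "\<And>r. \<Delta> - r ^ 2 \<noteq> 0 \<and> v (\<Delta> - r ^ 2) \<le> 2 * v 2"
    and N: "x1 ^ 2 - \<Delta> * x2 ^ 2 \<noteq> 0"
  shows "even (v (x1 ^ 2 - \<Delta> * x2 ^ 2))"
proof (rule ccontr)
  let ?N = "x1 ^ 2 - \<Delta> * x2 ^ 2"
  assume "odd (v ?N)"
  then obtain k where k: "v ?N = 2 * k + 1"
    by (rule oddE)
  have "?N \<in> I (2 * (k + 1) - 1)"
    using mem_I_val[of ?N] k by (simp add: add.commute)
  then have "?N \<in> I (2 * (k + 1))"
    using norm_form_mem_I_iff[OF s close far, of "2 * (k + 1) - 1" "k + 1"]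
      norm_form_mem_I_iff[OF s close far, of "2 * (k + 1)" "k + 1"]
    by simp
  then show False
    using N k by (simp add: mem_I_iff)
qed

lemma even_val_norm_form_char2:
  assumes two: "(2::'a) = 0" and qd: "quad_defect v \<Delta> = {0}" and N: "x1 ^ 2 - \<Delta> * x2 ^ 2 \<noteq> 0"
  shows "even (v (x1 ^ 2 - \<Delta> * x2 ^ 2))"
proof (cases "x2 = 0")
  case True
  then show ?thesis
    using N by (simp add: val_power)
next
  case x2: False
  let ?N = "x1 ^ 2 - \<Delta> * x2 ^ 2"
  have "?N / x2 ^ 2 \<notin> quad_defect v \<Delta>"
    using qd N x2 by simp
  then obtain r where r: "?N / x2 ^ 2 \<notin> principal v (\<Delta> - r ^ 2)"
    by (auto simp: mem_quad_defect_iff)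
  have small: "(\<Delta> - r ^ 2) * x2 ^ 2 \<in> I (v ?N + 1)"
  proof (cases "\<Delta> - r ^ 2 = 0")
    case False
    have "v (?N / x2 ^ 2) = v ?N - 2 * v x2"
      using val_divide[OF N, of "x2 ^ 2"] x2 by (simp add: val_power)
    then have "v ?N - 2 * v x2 < v (\<Delta> - r ^ 2)"
      using r False by (simp add: principal_eq_I mem_I_iff)
    then show ?thesis
      using False x2 by (simp add: mem_I_iff val_mult val_power)
  qed simp
  \<comment> \<open>in characteristic 2 the cross term of (x1 - r x2)^2 vanishes\<close>
  have sq: "?N + (\<Delta> - r ^ 2) * x2 ^ 2 = (x1 - r * x2) ^ 2"
  proof -
    have "(x1 - r * x2) ^ 2 - (?N + (\<Delta> - r ^ 2) * x2 ^ 2) = 2 * (r ^ 2 * x2 ^ 2 - r * x1 * x2)"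
      by (simp add: algebra_simps power2_eq_square)
    then show ?thesis
      using two by simp
  qed
  note val_add_dominant[OF N small, unfolded sq]
  then have "x1 - r * x2 \<noteq> 0" "v ?N = 2 * v (x1 - r * x2)"
    by (simp_all add: val_power)
  then show ?thesis
    by simp
qed

lemma diff_square_notin_I_of_odd_val:
  assumes t: "t \<noteq> 0" and odd: "x \<noteq> 0 \<Longrightarrow> odd (v x)"
  shows "x - t ^ 2 \<notin> I (2 * v t + 1)"
proof
  assume "x - t ^ 2 \<in> I (2 * v t + 1)"
  then have "x - t ^ 2 \<in> I (v (t ^ 2) + 1)"
    using t by (simp add: val_power)
  from val_add_dominant[OF _ this] have "x \<noteq> 0" "v x = 2 * v t"
    using t by (simp_all add: val_power)
  then show False
    using odd by simp
qed

end

context discretely_valued_field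
begin

lemma exists_square_close_of_quad_defect:
  assumes qd: "quad_defect v \<rho> = principal v c" and c: "c \<noteq> 0"
  obtains s where "\<rho> - s ^ 2 \<in> I (v c)"
proof -
  have "\<exists>s. \<rho> - s ^ 2 \<in> I (v c)"
  proof (rule ccontr)
    assume far: "\<nexists>s. \<rho> - s ^ 2 \<in> I (v c)"
    \<comment> \<open>then c / \<pi> lies in every ideal (\<rho> - r^2) o, hence in the defect c o\<close>
    have vy: "v (c / \<pi>) = v c - 1"
      using c uniformizer_nonzero by (simp add: val_divide val_uniformizer)
    have "c / \<pi> \<in> principal v (\<rho> - r ^ 2)" for r
    proof -
      have "\<rho> - r ^ 2 \<notin> I (v c)"
        using far by blast
      then have "\<rho> - r ^ 2 \<noteq> 0" "v (\<rho> - r ^ 2) < v c"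
        by (auto simp: mem_I_iff)
      then show ?thesis
        using vy by (simp add: principal_eq_I mem_I_iff)
    qed
    then have "c / \<pi> \<in> principal v c"
      using qd by (simp add: mem_quad_defect_iff flip: qd)
    then have "c / \<pi> \<in> I (v c)"
      using c by (simp add: principal_eq_I)
    then show False
      using vy c uniformizer_nonzero by (simp add: mem_I_iff)
  qed
  then show ?thesis
    using that by blast
qed

lemma principal_two_uniformizer_power: "(2::'a) \<noteq> 0 \<Longrightarrow> principal v (2 * \<pi> ^ l) = I (v 2 + int l)"
  using uniformizer_nonzero by (simp add: principal_eq_I val_mult val_uniformizer_power)

lemma uniformizer_norm_form_congruence_iff:
  assumes s: "s \<in> I 0" and close: "\<Delta> - s ^ 2 \<in> I (2 * v 2)"
    and far: "\<And>r. \<Delta> - r ^ 2 \<noteq> 0 \<and> v (\<Delta> - r ^ 2) \<le> 2 * v 2"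
    and e: "v 2 = int e" and t2: "t ^ 2 \<in> I (int e + int l)"
  shows "\<pi> * (x1 ^ 2 - \<Delta> * x2 ^ 2) - t ^ 2 \<in> I (int e + int l)
    \<longleftrightarrow> x1 - s * x2 \<in> I (int ((e + l) div 2)) \<and> x2 \<in> I (int ((e + l) div 2) - int e)"
proof -
  have "\<pi> * (x1 ^ 2 - \<Delta> * x2 ^ 2) - t ^ 2 \<in> I (int e + int l)
    \<longleftrightarrow> x1 ^ 2 - \<Delta> * x2 ^ 2 \<in> I (int e + int l - 1)"
    using diff_mem_I_iff[OF t2] uniformizer_power_mult_mem_I_iff[of 1 _ "int e + int l - 1"] by simp
  also have "\<dots> \<longleftrightarrow> x1 - s * x2 \<in> I (int ((e + l) div 2)) \<and> x2 \<in> I (int ((e + l) div 2) - int e)"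
    using norm_form_mem_I_iff[OF s close far, of "int e + int l - 1" "int ((e + l) div 2)"] e by simp
  finally show ?thesis .
qed

end

section \<open>The local densities\<close>

context residually_finite_dvf
begin

lemma Xl_norm_form_eq_0:
  assumes even: "\<And>x1 x2. x1 ^ 2 - \<Delta> * x2 ^ 2 \<noteq> 0 \<Longrightarrow> even (v (x1 ^ 2 - \<Delta> * x2 ^ 2))"
    and t: "t \<noteq> 0" and l: "principal v (2 * \<pi> ^ l) \<subseteq> I (2 * v t + 1)"
  shows "Xl v q \<pi> (\<lambda>(x1, x2). \<pi> * (x1 ^ 2 - \<Delta> * x2 ^ 2)) (t ^ 2) l = 0"
proof -
  have "odd (v (\<pi> * (x1 ^ 2 - \<Delta> * x2 ^ 2)))" if "\<pi> * (x1 ^ 2 - \<Delta> * x2 ^ 2) \<noteq> 0" for x1 x2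
    using that even[of x1 x2] uniformizer_nonzero by (simp add: val_mult val_uniformizer)
  then have "\<pi> * (x1 ^ 2 - \<Delta> * x2 ^ 2) - t ^ 2 \<notin> principal v (2 * \<pi> ^ l)" for x1 x2
    using diff_square_notin_I_of_odd_val[OF t] l by blast
  then have "{x \<in> I 0 \<times> I 0. (\<lambda>(x1, x2). \<pi> * (x1 ^ 2 - \<Delta> * x2 ^ 2)) x - t ^ 2
    \<in> principal v (2 * \<pi> ^ l)} = {}"
    by auto
  then show ?thesis
    unfolding Xl_def by (simp only: haar2_empty)
qed

lemma Xl_norm_form_box:
  assumes two: "(2::'a) \<noteq> 0" and e: "v 2 = int e"
    and s: "s \<in> I 0" and close: "\<Delta> - s ^ 2 \<in> I (2 * v 2)"
    and far: "\<And>r. \<Delta> - r ^ 2 \<noteq> 0 \<and> v (\<Delta> - r ^ 2) \<le> 2 * v 2"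
    and t: "v t = int T" and l: "e + l \<le> 2 * T"
  shows "Xl v q \<pi> (\<lambda>(x1, x2). \<pi> * (x1 ^ 2 - \<Delta> * x2 ^ 2)) (t ^ 2) l
    = (1 / real q) ^ ((e + l) div 2 + ((e + l) div 2 - e))"
proof -
  let ?A = "(e + l) div 2"
  have t2: "t ^ 2 \<in> I (int e + int l)"
    using t l by (cases "t = 0") (simp_all add: mem_I_iff val_power)
  note key = uniformizer_norm_form_congruence_iff[OF s close far e t2]
  have box: "x1 \<in> I 0 \<and> x2 \<in> I 0 \<and> x1 - s * x2 \<in> I (int ?A) \<and> x2 \<in> I (int ?A - int e)
    \<longleftrightarrow> x1 - s * x2 \<in> I (int ?A) \<and> x2 \<in> I (int (?A - e))" for x1 x2
  proof -
    have "x2 \<in> I 0 \<and> x2 \<in> I (int ?A - int e) \<longleftrightarrow> x2 \<in> I (int (?A - e))"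
      by (auto simp: mem_I_iff)
    moreover have "x1 \<in> I 0" if "x1 - s * x2 \<in> I (int ?A)" "x2 \<in> I 0"
      using I_add[OF I_antimono[of 0 "int ?A", THEN subsetD, OF _ that(1)] I_mult[OF s that(2)]]
      by simp
    ultimately show ?thesis
      using I_antimono[of 0 "int (?A - e)"] by blast
  qed
  have "{x \<in> I 0 \<times> I 0. (\<lambda>(x1, x2). \<pi> * (x1 ^ 2 - \<Delta> * x2 ^ 2)) x - t ^ 2 \<in> principal v (2 * \<pi> ^ l)}
    = {p. fst p - s * snd p \<in> I (int ?A) \<and> snd p \<in> I (int (?A - e))}"
  proof (intro set_eqI)
    fix p :: "'a \<times> 'a"
    show "p \<in> {x \<in> I 0 \<times> I 0. (\<lambda>(x1, x2). \<pi> * (x1 ^ 2 - \<Delta> * x2 ^ 2)) x - t ^ 2 \<in> principal v (2 * \<pi> ^ l)}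
      \<longleftrightarrow> p \<in> {p. fst p - s * snd p \<in> I (int ?A) \<and> snd p \<in> I (int (?A - e))}"
      by (cases p) (simp only: principal_two_uniformizer_power[OF two] e key box[symmetric]
          mem_Collect_eq mem_Times_iff fst_conv snd_conv prod.case conj_assoc)
  qed
  then show ?thesis
    unfolding Xl_def using haar2_sheared_box[OF s] by simp
qed

lemma Xl_norm_form:
  assumes two: "(2::'a) \<noteq> 0" and \<Delta>: "\<Delta> \<in> I 0" and qd: "quad_defect v \<Delta> = principal v 4"
    and t: "t \<noteq> 0" "v t = int T"
  shows "Xl v q \<pi> (\<lambda>(x1, x2). \<pi> * (x1 ^ 2 - \<Delta> * x2 ^ 2)) (t ^ 2) l
    = (if nat (v 2) + l \<le> 2 * T
       then (1 / real q) ^ ((nat (v 2) + l) div 2 + ((nat (v 2) + l) div 2 - nat (v 2))) else 0)"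
proof -
  define e where "e = nat (v 2)"
  have e: "v 2 = int e"
    using val_two_nonneg[OF two] by (simp add: e_def)
  have four_eq: "(4::'a) = 2 * 2"
    by simp
  have four: "(4::'a) \<noteq> 0" "v 4 = 2 * v 2"
    using two val_mult[OF two two] unfolding four_eq by (simp_all only: mult_eq_0_iff) simp
  have far: "\<Delta> - r ^ 2 \<noteq> 0 \<and> v (\<Delta> - r ^ 2) \<le> 2 * v 2" for r
    using quad_defect_val_bound[OF qd four(1)] four(2) by simp
  obtain s where "\<Delta> - s ^ 2 \<in> I (v 4)"
    by (rule exists_square_close_of_quad_defect[OF qd four(1)])
  then have close: "\<Delta> - s ^ 2 \<in> I (2 * v 2)"
    by (simp only: four(2))
  have "s ^ 2 \<in> I 0"
    using I_diff[OF \<Delta> I_antimono[of 0 "2 * v 2", THEN subsetD, OF _ close]] e by simp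
  then have s: "s \<in> I 0"
    by (rule mem_I0_of_square)
  show ?thesis
  proof (cases "e + l \<le> 2 * T")
    case True
    then show ?thesis
      using Xl_norm_form_box[OF two e s close far t(2) True] by (simp add: e_def)
  next
    case False
    have "principal v (2 * \<pi> ^ l) \<subseteq> I (2 * v t + 1)"
      using False t(2) e by (simp add: principal_two_uniformizer_power[OF two] I_antimono)
    then show ?thesis
      using Xl_norm_form_eq_0[OF even_val_norm_form[OF s close far] t(1)] False by (simp add: e_def)
  qed
qed

lemma Xl_norm_form_char2:
  assumes two: "(2::'a) = 0" and qd: "quad_defect v \<Delta> = principal v 4" and t: "t \<noteq> 0"
  shows "Xl v q \<pi> (\<lambda>(x1, x2). \<pi> * (x1 ^ 2 - \<Delta> * x2 ^ 2)) (t ^ 2) l = 0"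
proof -
  have "(4::'a) = 2 * 2"
    by simp
  then have "quad_defect v \<Delta> = {0}"
    using qd two by (simp add: principal_zero)
  moreover have "principal v (2 * \<pi> ^ l) \<subseteq> I (2 * v t + 1)"
    using two by (simp add: principal_zero)
  ultimately show ?thesis
    by (intro Xl_norm_form_eq_0 even_val_norm_form_char2[OF two] t)
qed

end

section \<open>The generating series\<close>

(* u stands for |varpi| = 1/q and w = z u. X_poly collects the nonzero terms z^l X_l, l <= 2T - e,
   with X_l = u^(A + (A - e)), A = (e + l) div 2; the truncated subtraction A - e is intended. *)

definition X_poly :: "'a::field \<Rightarrow> 'a \<Rightarrow> nat \<Rightarrow> nat \<Rightarrow> 'a" where
  "X_poly z u e T = (\<Sum>l\<le>2 * T - e. z ^ l * u ^ ((e + l) div 2 + ((e + l) div 2 - e)))"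

definition X_closed_form :: "'a::field \<Rightarrow> 'a \<Rightarrow> nat \<Rightarrow> nat \<Rightarrow> 'a" where
  "X_closed_form z u e T = (let w = z * u in
     (u ^ (e div 2) + z * u ^ ((e + 1) div 2) - z * w ^ e * (z * w) powi (min (int T - int e) 0) * (w + 1))
       / (1 - z * w)
     + w ^ e * (z + w ^ 2) * (1 - w ^ (2 * nat (int T - int e))) / (1 - w ^ 2))"

lemma X_poly_Suc:
  assumes "e \<le> 2 * T"
  shows "X_poly z u e (Suc T) = X_poly z u e T
    + z ^ (2 * T - e + 1) * u ^ (T + (T - e)) + z ^ (2 * T - e + 2) * u ^ (T + 1 + (T + 1 - e))"
proof -
  have "2 * Suc T - e = Suc (Suc (2 * T - e))" "(e + Suc (2 * T - e)) div 2 = T"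
    "(e + Suc (Suc (2 * T - e))) div 2 = T + 1"
    using assms by simp_all
  then show ?thesis
    unfolding X_poly_def by (simp add: algebra_simps)
qed

lemma X_closed_form_le:
  assumes "T \<le> e"
  shows "X_closed_form z u e T = (u ^ (e div 2) + z * u ^ ((e + 1) div 2)
    - z * (z * u) ^ e * (z * u + 1) / (z * (z * u)) ^ (e - T)) / (1 - z * (z * u))"
proof -
  have m: "min (int T - int e) 0 = - int (e - T)" and n: "nat (int T - int e) = 0"
    using assms by simp_all
  have "(z * (z * u)) powi (min (int T - int e) 0) = inverse ((z * (z * u)) ^ (e - T))"
    unfolding m by (simp add: power_int_minus)
  then show ?thesis
    unfolding X_closed_form_def Let_def n by (simp add: divide_inverse)
qed

lemma X_closed_form_ge:
  assumes "e \<le> T"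
  shows "X_closed_form z u e T = (u ^ (e div 2) + z * u ^ ((e + 1) div 2)
    - z * (z * u) ^ e * (z * u + 1)) / (1 - z * (z * u))
    + (z * u) ^ e * (z + (z * u) ^ 2) * (1 - (z * u) ^ (2 * (T - e))) / (1 - (z * u) ^ 2)"
proof -
  have "min (int T - int e) 0 = 0" "nat (int T - int e) = T - e"
    using assms by simp_all
  then show ?thesis
    unfolding X_closed_form_def Let_def by simp
qed

lemma X_closed_form_Suc_below:
  assumes z: "z \<noteq> 0" and u: "u \<noteq> 0" and d1: "1 - z * (z * u) \<noteq> 0"
    and T: "e \<le> 2 * T" "T < e"
  shows "X_closed_form z u e (Suc T) = X_closed_form z u e T
    + z ^ (2 * T - e + 1) * u ^ (T + (T - e)) + z ^ (2 * T - e + 2) * u ^ (T + 1 + (T + 1 - e))"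
proof -
  define k where "k = e - Suc T"
  define r where "r = 2 * T - e"
  have er: "e = r + Suc k + Suc k" "e - T = Suc k" "e - Suc T = k"
    "2 * T - e = r" "T + (T - e) = r + Suc k" "T + 1 + (T + 1 - e) = r + Suc k + 1"
    using T unfolding k_def r_def by simp_all
  let ?inc = "z ^ (r + 1) * u ^ (r + Suc k) + z ^ (r + 2) * u ^ (r + Suc k + 1)"
  have key: "z * (z * u) ^ e * (z * u + 1) = ?inc * (z * (z * u)) ^ Suc k"
    unfolding er(1) by (simp add: power_add algebra_simps power2_eq_square)
  have "(z * (z * u)) ^ k \<noteq> 0"
    using z u by simp
  then have "z * (z * u) ^ e * (z * u + 1) / (z * (z * u)) ^ Suc k = ?inc"
    "z * (z * u) ^ e * (z * u + 1) / (z * (z * u)) ^ k = ?inc * (z * (z * u))"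
    unfolding key using z u by simp_all
  moreover have "Suc T \<le> e" "T \<le> e"
    using T by simp_all
  ultimately show ?thesis
    using d1 unfolding X_closed_form_le[OF \<open>Suc T \<le> e\<close>] X_closed_form_le[OF \<open>T \<le> e\<close>] er(2-)
    by (simp add: field_simps)
qed

lemma X_closed_form_Suc_above:
  assumes d2: "1 - (z * u) ^ 2 \<noteq> 0" and T: "e \<le> T"
  shows "X_closed_form z u e (Suc T) = X_closed_form z u e T
    + z ^ (2 * T - e + 1) * u ^ (T + (T - e)) + z ^ (2 * T - e + 2) * u ^ (T + 1 + (T + 1 - e))"
proof -
  define p where "p = T - e"
  have ep: "Suc T - e = p + 1" "T - e = p" "2 * T - e = e + 2 * p"
    "T + p = e + 2 * p" "T + 1 + (T + 1 - e) = e + 2 * p + 2"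
    using T unfolding p_def by simp_all
  let ?B = "(z * u) ^ e * (z + (z * u) ^ 2)"
  have geometric: "?B * (1 - x ^ Suc p) / (1 - x) = ?B * (1 - x ^ p) / (1 - x) + ?B * x ^ p"
    if "1 - x \<noteq> 0" for x
    using that by (simp add: field_simps)
  have "z ^ (e + 2 * p + 1) * u ^ (e + 2 * p) + z ^ (e + 2 * p + 2) * u ^ (e + 2 * p + 2)
    = ?B * (z * u) ^ (2 * p)"
    by (simp add: power_add power_mult_distrib algebra_simps power2_eq_square)
  moreover have "?B * (1 - (z * u) ^ (2 * (p + 1))) / (1 - (z * u) ^ 2)
    = ?B * (1 - (z * u) ^ (2 * p)) / (1 - (z * u) ^ 2) + ?B * (z * u) ^ (2 * p)"
    using geometric[OF d2] by (simp only: power_mult Suc_eq_plus1)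
  moreover have "e \<le> Suc T"
    using T by simp
  ultimately show ?thesis
    unfolding X_closed_form_ge[OF \<open>e \<le> Suc T\<close>] X_closed_form_ge[OF T] ep
    by (simp add: add.assoc)
qed

lemma X_poly_eq_X_closed_form_base:
  assumes z: "z \<noteq> 0" and u: "u \<noteq> 0" and d1: "1 - z * (z * u) \<noteq> 0"
  shows "X_poly z u e ((e + 1) div 2) = X_closed_form z u e ((e + 1) div 2)"
proof -
  have "(e + 1) div 2 \<le> e"
    by simp
  note closed = X_closed_form_le[OF this, of z u]
  have nz: "(z * (z * u)) ^ k \<noteq> 0" for k
    using z u by simp
  obtain k where "e = 2 * k \<or> e = 2 * k + 1"
    by (metis oddE evenE)
  then consider "e = 2 * k" | "e = 2 * k + 1"
    by blast
  then show ?thesis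
  proof cases
    case 1
    have "z * (z * u) ^ e * (z * u + 1) = z * u ^ k * (z * u + 1) * (z * (z * u)) ^ k"
      unfolding 1 mult_2 power_add power_mult_distrib by (simp add: algebra_simps)
    moreover have "(e + 1) div 2 = k" "e div 2 = k" "e - k = k" "2 * k - e = 0"
      using 1 by simp_all
    ultimately show ?thesis
      using d1 nz[of k] unfolding closed by (simp add: X_poly_def field_simps)
  next
    case 2
    have "z * (z * u) ^ e * (z * u + 1) = z * z * u ^ (k + 1) * (z * u + 1) * (z * (z * u)) ^ k"
      unfolding 2 mult_2 power_add power_mult_distrib by (simp add: algebra_simps)
    moreover have "(e + 1) div 2 = k + 1" "e div 2 = k" "e - (k + 1) = k" "2 * (k + 1) - e = 1"
      using 2 by simp_all
    ultimately show ?thesis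
      using d1 nz[of k] unfolding closed by (simp add: X_poly_def field_simps)
  qed
qed

lemma X_poly_eq_X_closed_form:
  assumes z: "z \<noteq> 0" and u: "u \<noteq> 0" and d1: "1 - z * (z * u) \<noteq> 0" and d2: "1 - (z * u) ^ 2 \<noteq> 0"
    and T: "e \<le> 2 * T"
  shows "X_poly z u e T = X_closed_form z u e T"
proof -
  have "(e + 1) div 2 \<le> T"
    using T by simp
  then show ?thesis
  proof (induction T rule: dec_induct)
    case base
    show ?case
      by (rule X_poly_eq_X_closed_form_base[OF z u d1])
  next
    case (step T)
    then have "e \<le> 2 * T"
      by simp
    have "X_closed_form z u e (Suc T) = X_closed_form z u e T
      + z ^ (2 * T - e + 1) * u ^ (T + (T - e)) + z ^ (2 * T - e + 2) * u ^ (T + 1 + (T + 1 - e))"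
      using X_closed_form_Suc_below[OF z u d1 \<open>e \<le> 2 * T\<close>] X_closed_form_Suc_above[OF d2]
      by (cases "T < e") simp_all
    then show ?case
      unfolding X_poly_Suc[OF \<open>e \<le> 2 * T\<close>] step.IH by (rule sym)
  qed
qed

lemma X_poly_eq_X_closed_form_powr:
  assumes q: "2 \<le> q" and \<beta>: "0 \<le> Re \<beta>" and z: "z = (of_nat q :: complex) powr (- \<beta>)"
    and T: "e \<le> 2 * T"
  shows "X_poly z (of_real (1 / real q)) e T = X_closed_form z (of_real (1 / real q)) e T"
proof -
  let ?u = "complex_of_real (1 / real q)"
  have "norm z = real q powr (- Re \<beta>)"
    using q unfolding z by (subst norm_powr_real_powr) auto
  also have "\<dots> \<le> 1"
    using q \<beta> by (simp add: powr_minus ge_one_powr_ge_zero field_simps)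
  finally have nz: "norm z \<le> 1" .
  have nu: "norm ?u \<le> 1 / 2"
    using q unfolding norm_of_real by simp
  have "norm (z * (z * ?u)) \<le> 1 * (1 * (1 / 2))" "norm ((z * ?u) ^ 2) \<le> (1 * (1 / 2)) ^ 2"
    unfolding norm_mult norm_power using nz nu by (intro mult_mono power_mono; simp)+
  then have "1 - z * (z * ?u) \<noteq> 0" "1 - (z * ?u) ^ 2 \<noteq> 0"
    by (auto simp: power2_eq_square)
  moreover have "z \<noteq> 0" "?u \<noteq> 0"
    using q z by simp_all
  ultimately show ?thesis
    using X_poly_eq_X_closed_form T by blast
qed

context residually_finite_dvf
begin

lemma sums_Xl_norm_form:
  fixes z :: "'b::real_normed_field"
  assumes "(2::'a) \<noteq> 0" "\<Delta> \<in> I 0" "quad_defect v \<Delta> = principal v 4" "t \<noteq> 0" "v t = int T"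
  shows "(\<lambda>l. z ^ l * of_real (Xl v q \<pi> (\<lambda>(x1, x2). \<pi> * (x1 ^ 2 - \<Delta> * x2 ^ 2)) (t ^ 2) l))
    sums (if nat (v 2) \<le> 2 * T then X_poly z (of_real (1 / real q)) (nat (v 2)) T else 0)"
    (is "?f sums _")
proof -
  define e where "e = nat (v 2)"
  have Xl: "?f l = z ^ l * of_real (if e + l \<le> 2 * T
      then (1 / real q) ^ ((e + l) div 2 + ((e + l) div 2 - e)) else 0)" for l
    unfolding e_def using Xl_norm_form[OF assms] by simp
  show ?thesis
  proof (cases "e \<le> 2 * T")
    case True
    have "?f sums (\<Sum>l\<le>2 * T - e. ?f l)"
      by (rule sums_finite) (auto simp: Xl)
    moreover have "(\<Sum>l\<le>2 * T - e. ?f l) = X_poly z (of_real (1 / real q)) e T"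
      unfolding X_poly_def Xl using True by (intro sum.cong) (auto simp: of_real_power)
    ultimately show ?thesis
      using True by (simp flip: e_def)
  next
    case False
    then show ?thesis
      by (simp add: Xl sums_0 flip: e_def)
  qed
qed

end

theorem proposition6p3:
  fixes v :: "'a::field \<Rightarrow> int" and q :: nat and \<pi> \<Delta> t :: 'a and T :: nat
    and \<beta> z w :: complex
  assumes "nonarch_local_field v q"
    and "residue_char_two v"
    and "\<pi> \<noteq> 0" and "v \<pi> = 1"
    and "\<Delta> \<noteq> 0" and "v \<Delta> = 0"
    and "quad_defect v \<Delta> = principal v 4"
    and "t \<in> ring_int v" and "t \<noteq> 0" and "v t = int T"
    and "0 < Re \<beta>"
    and "z = (of_nat q) powr (- \<beta>)" and "w = z / of_nat q"
  shows "(enat (2 * T) < ord2 v \<longrightarrow>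
           (\<lambda>l. z ^ l * of_real (Xl v q \<pi> (\<lambda>(x1, x2). \<pi> * (x1 ^ 2 - \<Delta> * x2 ^ 2)) (t ^ 2) l))
             sums 0)
       \<and> (ord2 v \<le> enat (2 * T) \<longrightarrow>
           (let e = the_enat (ord2 v) in
           (\<lambda>l. z ^ l * of_real (Xl v q \<pi> (\<lambda>(x1, x2). \<pi> * (x1 ^ 2 - \<Delta> * x2 ^ 2)) (t ^ 2) l))
             sums
             ((of_real ((1 / real q) ^ (e div 2)) + z * of_real ((1 / real q) ^ ((e + 1) div 2))
                - z * w ^ e * (z * w) powi (min (int T - int e) 0) * (w + 1)) / (1 - z * w)
              + w ^ e * (z + w ^ 2) * (1 - w ^ (2 * nat (int T - int e))) / (1 - w ^ 2))))"
proof -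
  interpret residually_finite_dvf v \<pi> q
    using assms(1,3,4) unfolding nonarch_local_field_def by unfold_locales auto
  show ?thesis
  proof (cases "(2::'a) = 0")
    case True
    then show ?thesis
      using Xl_norm_form_char2[OF True assms(7,9)] by (simp add: ord2_def)
  next
    case two: False
    have "\<Delta> \<in> I 0"
      using assms(6) by (simp add: mem_I_iff)
    note sums = sums_Xl_norm_form[OF two this assms(7,9,10), of z]
    have "w = z * of_real (1 / real q)"
      using assms(13) by (simp add: divide_inverse)
    then show ?thesis
      using sums X_poly_eq_X_closed_form_powr[OF card_residue_field_ge_2 _ assms(12)] assms(11) two
      by (auto simp: ord2_def X_closed_form_def Let_def of_real_power)
  qed
qed

end
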